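(* Let $\eta_1,\dots,\eta_n$ be admissible measures on $\mathbb R$. For each $i$ let $M_i(dx):=\cosh(x)\eta_i(dx)$ (a probability measure), let $X_i\sim M_i$ be independent and $U_i:=\tanh(X_i)$. Let $\bar U:=\tanh(\bar X)$ with $\bar X\sim\frac1n\sum_iM_i$, and let $\bar U_1,\dots,\bar U_n$ be i.i.d. copies of $\bar U$. Define $V:=\sum_{i=1}^nU_i^2$ and $\bar V:=\sum_{i=1}^n\bar U_i^2$. Then $\mathbb E\sqrt{\bar V}\le\mathbb E\sqrt V$.
   Context: A finitely supported positive measure $\eta$ on $\mathbb R$ is called admissible if $\int e^x\,\eta(dx)=\int e^{-x}\,\eta(dx)=1$. *)

theory Defs
  imports "HOL-Analysis.Analysis"
begin

text \<open>A finitely supported positive measure on the reals is represented by its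
  weight function w : real => real (w x = mass of the point x), with finite support.\<close>

definition supp_meas :: "(real \<Rightarrow> real) \<Rightarrow> real set" where
  "supp_meas w = {x. w x \<noteq> 0}"

definition fin_pos_measure :: "(real \<Rightarrow> real) \<Rightarrow> bool" where
  "fin_pos_measure w \<longleftrightarrow> finite (supp_meas w) \<and> (\<forall>x. 0 \<le> w x)"

definition admissible :: "(real \<Rightarrow> real) \<Rightarrow> bool" where
  "admissible w \<longleftrightarrow> fin_pos_measure w
     \<and> (\<Sum>x\<in>supp_meas w. exp x * w x) = 1
     \<and> (\<Sum>x\<in>supp_meas w. exp (- x) * w x) = 1"

definition Mmeas :: "(real \<Rightarrow> real) \<Rightarrow> real \<Rightarrow> real" where
  "Mmeas w x = cosh x * w x"

text \<open>E sqrt(V), V = sum_i tanh(X_i)^2 with X_i ~ M_i independent, i < n: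
  expectation over the product measure, a finite sum over the product of supports.\<close>
definition E_sqrt_V :: "nat \<Rightarrow> (nat \<Rightarrow> real \<Rightarrow> real) \<Rightarrow> real" where
  "E_sqrt_V n M = (\<Sum>f\<in>PiE {..<n} (\<lambda>i. supp_meas (M i)).
       (\<Prod>i<n. M i (f i)) * sqrt (\<Sum>i<n. (tanh (f i))\<^sup>2))"

definition Mbar :: "nat \<Rightarrow> (nat \<Rightarrow> real \<Rightarrow> real) \<Rightarrow> real \<Rightarrow> real" where
  "Mbar n eta x = (1 / real n) * (\<Sum>i<n. Mmeas (eta i) x)"

end

theory Submission
  imports Defs
begin

text \<open>For \<open>z \<ge> 0\<close> the substitution \<open>s = z t\<close> gives
  \<open>sqrt z = c\<^sup>-\<^sup>1 \<integral>\<^sub>0\<^sup>\<infinity> (1 - exp (-z t)) t powr (-3/2) dt\<close> with a constant \<open>c > 0\<close>.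
  Applied to \<open>z = V\<close> and combined with independence, this gives
  \<open>E sqrt V = c\<^sup>-\<^sup>1 \<integral>\<^sub>0\<^sup>\<infinity> (1 - \<Prod>\<^sub>i L\<^sub>i t) t powr (-3/2) dt\<close> with \<open>L\<^sub>i t = E exp (-t U\<^sub>i\<^sup>2)\<close>.
  Passing to i.i.d. copies of the mixture replaces every \<open>L\<^sub>i\<close> by their arithmetic mean, whose
  \<open>n\<close>-th power dominates the product by AM-GM; so the integrand, and with it \<open>E sqrt V\<close>,
  can only decrease.\<close>

definition sqrt_kernel :: "real \<Rightarrow> real \<Rightarrow> real" where
  "sqrt_kernel z t = (1 - exp (-(z * t))) * t powr (-3/2)"

text \<open>The constant equals \<open>2 sqrt pi\<close>; only its positivity is needed.\<close>

definition sqrt_kernel_const :: real where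
  "sqrt_kernel_const = integral {0<..} (sqrt_kernel 1)"

lemma absolutely_integrable_sqrt_kernel_1: "sqrt_kernel 1 absolutely_integrable_on {0<..}"
proof -
  let ?b = "\<lambda>t::real. if t \<le> 1 then t powr (-1/2) else t powr (-3/2)"
  have "(\<lambda>t::real. t powr (-1/2)) integrable_on {0<..1}"
    by (rule integrable_on_powr_from_0') auto
  then have near0: "?b integrable_on {0<..1}"
    by (rule integrable_spike[where S="{}"]) auto
  have "(\<lambda>t::real. t powr (-3/2)) integrable_on {1..}"
    using has_integral_powr_to_inf[of "-3/2" 1] unfolding integrable_on_def by auto
  then have near_infinity: "?b integrable_on {1..}"
    by (rule integrable_spike[where S="{}"]) auto
  have bound: "?b integrable_on {0<..}"
    by (rule integrable_Un'[OF near0 near_infinity])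
       (auto intro: negligible_subset[OF negligible_sing[of "1::real"]])
  show ?thesis
  proof (rule measurable_bounded_by_integrable_imp_absolutely_integrable[OF _ _ bound])
    show "sqrt_kernel 1 \<in> borel_measurable (lebesgue_on {0<..})"
      unfolding sqrt_kernel_def
      by (rule continuous_imp_measurable_on_sets_lebesgue) (auto intro!: continuous_intros)
  next
    fix t :: real assume t: "t \<in> {0<..}"
    have "1 - exp (-t) \<le> min 1 t" using exp_ge_add_one_self[of "-t"] by simp
    then have "norm (sqrt_kernel 1 t) \<le> min 1 t * t powr (-3/2)"
      using t by (auto simp: sqrt_kernel_def intro!: mult_right_mono)
    also have "\<dots> \<le> ?b t"
      using t by (auto simp: powr_mult_base min_def)
    finally show "norm (sqrt_kernel 1 t) \<le> ?b t" .
  qed auto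
qed

lemma sqrt_kernel_const_pos: "sqrt_kernel_const > 0"
proof -
  define c where "c = (1 - exp (-1)) * (2::real) powr (-3/2)"
  have int12: "sqrt_kernel 1 integrable_on {1..2}"
    unfolding sqrt_kernel_def by (intro integrable_continuous_interval continuous_intros) auto
  have "0 < integral {1..2::real} (\<lambda>_. c)"
    by (simp add: c_def)
  also have "\<dots> \<le> integral {1..2} (sqrt_kernel 1)"
  proof (rule integral_le)
    fix t :: real assume t: "t \<in> {1..2}"
    have "(2::real) powr (-3/2) \<le> t powr (-3/2)" using t by (intro powr_mono2') auto
    then show "c \<le> sqrt_kernel 1 t"
      using t unfolding c_def sqrt_kernel_def by (intro mult_mono) auto
  qed (use int12 in auto)
  also have "\<dots> \<le> sqrt_kernel_const"
    unfolding sqrt_kernel_const_def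
    using int12 absolutely_integrable_sqrt_kernel_1 set_lebesgue_integral_eq_integral(1)
    by (intro integral_subset_le) (auto simp: sqrt_kernel_def)
  finally show ?thesis .
qed

lemma has_integral_sqrt_kernel:
  assumes "z \<ge> 0"
  shows "(sqrt_kernel z has_integral sqrt z * sqrt_kernel_const) {0<..}"
proof (cases "z = 0")
  case True
  then have "sqrt_kernel z = (\<lambda>_. 0)"
    by (simp add: sqrt_kernel_def fun_eq_iff)
  with True show ?thesis by simp
next
  case False
  with assms have z: "z > 0" by simp
  have image: "(\<lambda>x. z * x) ` {0<..} = {0::real<..}"
    using z by (auto intro!: image_eqI[of _ _ "_ / z"])
  have "(\<lambda>x. \<bar>z\<bar> * sqrt_kernel 1 (z * x)) absolutely_integrable_on {0<..} \<and>
        integral {0<..} (\<lambda>x. \<bar>z\<bar> * sqrt_kernel 1 (z * x)) = sqrt_kernel_const"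
    using has_absolute_integral_change_of_variables_1'
            [of "{0<..}" "\<lambda>x. z * x" "\<lambda>_. z" "sqrt_kernel 1" sqrt_kernel_const]
          absolutely_integrable_sqrt_kernel_1 z image
    by (auto simp: sqrt_kernel_const_def inj_on_def intro!: derivative_eq_intros)
  then have "((\<lambda>x. \<bar>z\<bar> * sqrt_kernel 1 (z * x)) has_integral sqrt_kernel_const) {0<..}"
    using set_lebesgue_integral_eq_integral(1) by (metis integrable_integral)
  then have scaled: "((\<lambda>x. sqrt z * (\<bar>z\<bar> * sqrt_kernel 1 (z * x))) has_integral sqrt z * sqrt_kernel_const) {0<..}"
    by (rule has_integral_mult_right)
  have rescale: "sqrt z * (\<bar>z\<bar> * sqrt_kernel 1 (z * x)) = sqrt_kernel z x" if "x \<in> {0<..}" for x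
  proof -
    have "sqrt z * z * z powr (-3/2) = z powr (1/2) * z powr 1 * z powr (-3/2)"
      using z by (simp add: powr_half_sqrt)
    also have "\<dots> = z powr (1/2 + 1 + (-3/2))"
      by (simp only: powr_add)
    also have "\<dots> = 1"
      using z by simp
    finally have "sqrt z * z * z powr (-3/2) = 1" .
    moreover have "(z * x) powr (-3/2) = z powr (-3/2) * x powr (-3/2)"
      using z that by (simp add: powr_mult)
    ultimately show ?thesis
      using z unfolding sqrt_kernel_def by (simp add: mult_ac)
  qed
  show ?thesis
    by (rule has_integral_eq[OF rescale scaled])
qed

definition weight_integral :: "(real \<Rightarrow> real) \<Rightarrow> (real \<Rightarrow> real) \<Rightarrow> real" where
  "weight_integral w g = (\<Sum>x\<in>supp_meas w. w x * g x)"

lemma weight_integral_superset: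
  assumes "finite U" and "supp_meas w \<subseteq> U"
  shows "weight_integral w g = (\<Sum>x\<in>U. w x * g x)"
  unfolding weight_integral_def
  by (rule sum.mono_neutral_left[OF assms]) (auto simp: supp_meas_def)

lemma weight_integral_nonneg:
  assumes "\<And>x. w x \<ge> 0" and "\<And>x. g x \<ge> 0"
  shows "weight_integral w g \<ge> 0"
  unfolding weight_integral_def using assms by (intro sum_nonneg mult_nonneg_nonneg)

lemma supp_meas_Mmeas [simp]: "supp_meas (Mmeas w) = supp_meas w"
  unfolding supp_meas_def Mmeas_def by simp

lemma admissible_Mmeas_total_mass:
  assumes "admissible w"
  shows "weight_integral (Mmeas w) (\<lambda>_. 1) = 1"
proof -
  have "weight_integral (Mmeas w) (\<lambda>_. 1) =
      ((\<Sum>x\<in>supp_meas w. exp x * w x) + (\<Sum>x\<in>supp_meas w. exp (- x) * w x)) / 2"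
    unfolding weight_integral_def supp_meas_Mmeas sum.distrib [symmetric] sum_divide_distrib
    by (simp add: Mmeas_def cosh_field_def distrib_right)
  with assms show ?thesis
    by (simp add: admissible_def)
qed

lemma supp_meas_Mbar: "supp_meas (Mbar n eta) \<subseteq> (\<Union>i<n. supp_meas (eta i))"
proof
  fix x assume "x \<in> supp_meas (Mbar n eta)"
  then have "(\<Sum>i<n. Mmeas (eta i) x) \<noteq> 0"
    by (simp add: supp_meas_def Mbar_def)
  then obtain i where "i < n" and "Mmeas (eta i) x \<noteq> 0"
    using sum.not_neutral_contains_not_neutral by blast
  then show "x \<in> (\<Union>i<n. supp_meas (eta i))"
    by (auto simp: supp_meas_def Mmeas_def)
qed

lemma weight_integral_Mbar:
  assumes "\<And>i. i < n \<Longrightarrow> finite (supp_meas (eta i))"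
  shows "weight_integral (Mbar n eta) g = (\<Sum>i<n. weight_integral (Mmeas (eta i)) g) / n"
proof -
  define U where "U = (\<Union>i<n. supp_meas (eta i))"
  have U: "finite U"
    using assms by (simp add: U_def)
  have "weight_integral (Mbar n eta) g = (\<Sum>x\<in>U. Mbar n eta x * g x)"
    using weight_integral_superset[OF U] supp_meas_Mbar unfolding U_def by blast
  also have "\<dots> = (\<Sum>x\<in>U. \<Sum>i<n. Mmeas (eta i) x * g x) / n"
    by (simp add: Mbar_def sum_distrib_right sum_divide_distrib)
  also have "\<dots> = (\<Sum>i<n. \<Sum>x\<in>U. Mmeas (eta i) x * g x) / n"
    by (subst sum.swap) (rule refl)
  also have "\<dots> = (\<Sum>i<n. weight_integral (Mmeas (eta i)) g) / n"
  proof -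
    have "weight_integral (Mmeas (eta i)) g = (\<Sum>x\<in>U. Mmeas (eta i) x * g x)" if "i < n" for i
      using that by (intro weight_integral_superset[OF U]) (auto simp: U_def)
    then show ?thesis
      by simp
  qed
  finally show ?thesis .
qed

definition laplace_tanh_sq :: "(real \<Rightarrow> real) \<Rightarrow> real \<Rightarrow> real" where
  "laplace_tanh_sq w t = weight_integral w (\<lambda>x. exp (- ((tanh x)\<^sup>2 * t)))"

lemma sum_PiE_prod_exp_tanh_sq:
  fixes n :: nat
  assumes "\<And>i. i < n \<Longrightarrow> finite (supp_meas (M i))"
  shows "(\<Sum>f\<in>PiE {..<n} (\<lambda>i. supp_meas (M i)).
            (\<Prod>i<n. M i (f i)) * exp (- ((\<Sum>i<n. (tanh (f i))\<^sup>2) * t)))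
         = (\<Prod>i<n. laplace_tanh_sq (M i) t)"
proof -
  have "(\<Prod>i<n. laplace_tanh_sq (M i) t) = (\<Sum>f\<in>PiE {..<n} (\<lambda>i. supp_meas (M i)).
          \<Prod>i<n. M i (f i) * exp (- ((tanh (f i))\<^sup>2 * t)))"
    unfolding laplace_tanh_sq_def weight_integral_def by (rule prod_sum_PiE) (use assms in auto)
  also have "\<dots> = (\<Sum>f\<in>PiE {..<n} (\<lambda>i. supp_meas (M i)).
            (\<Prod>i<n. M i (f i)) * exp (- ((\<Sum>i<n. (tanh (f i))\<^sup>2) * t)))"
    by (simp add: prod.distrib exp_sum sum_distrib_right sum_negf [symmetric])
  finally show ?thesis ..
qed

lemma has_integral_expectation_sqrt:
  fixes p S :: "'a \<Rightarrow> real"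
  assumes "finite P" and "sum p P = 1" and "\<And>f. f \<in> P \<Longrightarrow> S f \<ge> 0"
  shows "((\<lambda>t. (1 - (\<Sum>f\<in>P. p f * exp (- (S f * t)))) * t powr (-3/2)) has_integral
           (\<Sum>f\<in>P. p f * sqrt (S f)) * sqrt_kernel_const) {0<..}"
proof -
  have "((\<lambda>t. \<Sum>f\<in>P. p f * sqrt_kernel (S f) t) has_integral
          (\<Sum>f\<in>P. p f * (sqrt (S f) * sqrt_kernel_const))) {0<..}"
    using assms by (intro has_integral_sum has_integral_mult_right has_integral_sqrt_kernel) auto
  moreover have "(\<Sum>f\<in>P. p f * sqrt_kernel (S f) t) =
      (1 - (\<Sum>f\<in>P. p f * exp (- (S f * t)))) * t powr (-3/2)" for t
  proof -
    have "p f * sqrt_kernel (S f) t = (p f - p f * exp (- (S f * t))) * t powr (-3/2)" for f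
      by (simp add: sqrt_kernel_def algebra_simps)
    then have "(\<Sum>f\<in>P. p f * sqrt_kernel (S f) t) =
        (\<Sum>f\<in>P. p f - p f * exp (- (S f * t))) * t powr (-3/2)"
      by (simp add: sum_distrib_right)
    also have "\<dots> = (1 - (\<Sum>f\<in>P. p f * exp (- (S f * t)))) * t powr (-3/2)"
      using assms(2) by (simp add: sum_subtractf)
    finally show ?thesis .
  qed
  ultimately show ?thesis
    by (simp add: sum_distrib_right mult.assoc)
qed

lemma E_sqrt_V_has_integral:
  assumes fin: "\<And>i. i < n \<Longrightarrow> finite (supp_meas (M i))"
    and mass: "\<And>i. i < n \<Longrightarrow> weight_integral (M i) (\<lambda>_. 1) = 1"
  shows "((\<lambda>t. (1 - (\<Prod>i<n. laplace_tanh_sq (M i) t)) * t powr (-3/2)) has_integral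
           E_sqrt_V n M * sqrt_kernel_const) {0<..}"
proof -
  let ?P = "PiE {..<n} (\<lambda>i. supp_meas (M i))"
  let ?p = "\<lambda>f. \<Prod>i<n. M i (f i)"
  let ?S = "\<lambda>f. \<Sum>i<n. (tanh (f i))\<^sup>2"
  have laplace: "(\<Sum>f\<in>?P. ?p f * exp (- (?S f * t))) = (\<Prod>i<n. laplace_tanh_sq (M i) t)" for t
    using fin by (rule sum_PiE_prod_exp_tanh_sq)
  have "(\<Prod>i<n. laplace_tanh_sq (M i) 0) = 1"
    using mass by (intro prod.neutral) (simp add: laplace_tanh_sq_def)
  with laplace[of 0] have mass_PiE: "sum ?p ?P = 1"
    by simp
  have "finite ?P"
    using fin by (intro finite_PiE) auto
  from has_integral_expectation_sqrt[OF this mass_PiE, of ?S] show ?thesis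
    by (simp add: laplace E_sqrt_V_def sum_nonneg)
qed

lemma E_sqrt_V_mono_laplace:
  assumes "\<And>i. i < n \<Longrightarrow> finite (supp_meas (M i))"
    and "\<And>i. i < n \<Longrightarrow> weight_integral (M i) (\<lambda>_. 1) = 1"
    and "\<And>i. i < n \<Longrightarrow> finite (supp_meas (M' i))"
    and "\<And>i. i < n \<Longrightarrow> weight_integral (M' i) (\<lambda>_. 1) = 1"
    and "\<And>t. t > 0 \<Longrightarrow> (\<Prod>i<n. laplace_tanh_sq (M' i) t) \<le> (\<Prod>i<n. laplace_tanh_sq (M i) t)"
  shows "E_sqrt_V n M \<le> E_sqrt_V n M'"
proof -
  have "E_sqrt_V n M * sqrt_kernel_const \<le> E_sqrt_V n M' * sqrt_kernel_const"
  proof (rule has_integral_le)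
    show "((\<lambda>t. (1 - (\<Prod>i<n. laplace_tanh_sq (M i) t)) * t powr (-3/2)) has_integral
           E_sqrt_V n M * sqrt_kernel_const) {0<..}"
      using assms(1,2) by (rule E_sqrt_V_has_integral)
    show "((\<lambda>t. (1 - (\<Prod>i<n. laplace_tanh_sq (M' i) t)) * t powr (-3/2)) has_integral
           E_sqrt_V n M' * sqrt_kernel_const) {0<..}"
      using assms(3,4) by (rule E_sqrt_V_has_integral)
  qed (use assms(5) in \<open>auto intro!: mult_right_mono\<close>)
  with sqrt_kernel_const_pos show ?thesis
    by simp
qed

lemma prod_le_mean_power:
  fixes x :: "'a \<Rightarrow> real"
  assumes "finite S" and "\<And>i. i \<in> S \<Longrightarrow> x i \<ge> 0"
  shows "(\<Prod>i\<in>S. x i) \<le> ((\<Sum>i\<in>S. x i) / card S) ^ card S"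
proof (cases "S = {}")
  case False
  let ?k = "card S"
  have k: "?k > 0"
    using assms(1) False by (simp add: card_gt_0_iff)
  have root_nonneg: "root ?k (\<Prod>i\<in>S. x i) \<ge> 0"
    using assms(2) by (intro real_root_ge_zero prod_nonneg)
  have "root ?k (\<Prod>i\<in>S. x i) = (\<Prod>i\<in>S. x i) powr (1 / ?k)"
    using k assms(2) by (simp add: root_powr_inverse prod_nonneg)
  also have "\<dots> \<le> (\<Sum>i\<in>S. x i / ?k)"
    by (rule arith_geom_mean[OF assms(1) False assms(2)])
  finally have "root ?k (\<Prod>i\<in>S. x i) \<le> (\<Sum>i\<in>S. x i) / ?k"
    by (simp add: sum_divide_distrib)
  then have "root ?k (\<Prod>i\<in>S. x i) ^ ?k \<le> ((\<Sum>i\<in>S. x i) / ?k) ^ ?k"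
    using root_nonneg by (rule power_mono)
  then show ?thesis
    using k assms(2) by (simp add: prod_nonneg)
qed simp

theorem lemma5:
  fixes n :: nat and eta :: "nat \<Rightarrow> real \<Rightarrow> real"
  assumes "\<And>i. i < n \<Longrightarrow> admissible (eta i)"
  shows "E_sqrt_V n (\<lambda>_. Mbar n eta) \<le> E_sqrt_V n (\<lambda>i. Mmeas (eta i))"
proof (rule E_sqrt_V_mono_laplace)
  have fin: "\<And>i. i < n \<Longrightarrow> finite (supp_meas (eta i))"
    and nonneg: "\<And>i x. i < n \<Longrightarrow> eta i x \<ge> 0"
    using assms by (auto simp: admissible_def fin_pos_measure_def)
  show mass: "weight_integral (Mmeas (eta i)) (\<lambda>_. 1) = 1" if "i < n" for i
    using assms[OF that] by (rule admissible_Mmeas_total_mass)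
  show "finite (supp_meas (Mmeas (eta i)))" if "i < n" for i
    using fin[OF that] by simp
  show "finite (supp_meas (Mbar n eta))"
    by (rule finite_subset[OF supp_meas_Mbar]) (simp add: fin)
  show "weight_integral (Mbar n eta) (\<lambda>_. 1) = 1" if "i < n" for i
    using that by (simp add: weight_integral_Mbar[OF fin] mass)
  show "(\<Prod>i<n. laplace_tanh_sq (Mmeas (eta i)) t) \<le> (\<Prod>i<n. laplace_tanh_sq (Mbar n eta) t)" for t
  proof -
    have "laplace_tanh_sq (Mmeas (eta i)) t \<ge> 0" if "i < n" for i
      unfolding laplace_tanh_sq_def using nonneg[OF that]
      by (intro weight_integral_nonneg) (simp_all add: Mmeas_def)
    then have "(\<Prod>i<n. laplace_tanh_sq (Mmeas (eta i)) t) \<le>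
        ((\<Sum>i<n. laplace_tanh_sq (Mmeas (eta i)) t) / n) ^ n"
      using prod_le_mean_power[of "{..<n}"] by simp
    also have "\<dots> = (\<Prod>i<n. laplace_tanh_sq (Mbar n eta) t)"
      by (simp add: laplace_tanh_sq_def weight_integral_Mbar[OF fin])
    finally show ?thesis .
  qed
qed

end
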